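(* Consider an instance of the ranking with submodular valuations problem: a ground set $[m]=\{1,\dots,m\}$, $n$ normalized monotone submodular functions $f^1,\dots,f^n:2^{[m]}\to\mathbb{R}_+$ (given by value oracles), and a weight vector $w\in\mathbb{R}_+^n$. Let $\epsilon=\min\{f^i_S(j) : i\in[n],\ S\subseteq[m],\ j\in[m],\ f^i_S(j)>0\}$, where $f^i_S(j)=f^i(S\cup\{j\})-f^i(S)$. Then the linear ordering produced by the Adaptive Residual Updates algorithm (described below) has cost at most $O(\ln(1/\epsilon))$ times the cost of an optimal linear ordering.
   Context: A set function $f:2^{[m]}\to\mathbb{R}$ is submodular if $f(S)+f(T)\ge f(S\cup T)+f(S\cap T)$ for all $S,T\subseteq[m]$; normalized means $f(\emptyset)=0$; monotone means $f(S)\le f(T)$ whenever $S\subseteq T$. A linear ordering is a bijection $\pi:[m]\to[m]$, where $\pi(t)$ is the element placed at position $t$. The cover time $c_i$ of $f^i$ under $\pi$ is the minimal index $c$ with $f^i(\{\pi(1),\dots,\pi(c)\})\ge 1$ (it is assumed that $f^i([m])\ge1$ for every $i$, so cover times exist). The cost of $\pi$ is $\sum_{i=1}^n w_i c_i$, and the problem asks for an ordering of minimum cost. Adaptive Residual Updates algorithm: start with $S=\emptyset$. For $t=1,\dots,m$: for every $i\in[n]$ and every $j\in[m]\setminus S$ set $P_{ij}=0$ if $f^i(S)\ge 1$, and otherwise $P_{ij}=\min\{1,\ (f^i(S\cup\{j\})-f^i(S))/(1-f^i(S))\}$; then choose $j\in[m]\setminus S$ maximizing $\sum_{i=1}^n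 w_iP_{ij}$, set $S\leftarrow S\cup\{j\}$ and $\pi(t)=j$. *)

theory Defs
  imports Complex_Main
begin

text \<open>Ground set [m] = {1..m}; functions f i for i in {1..n}; orderings are
bijections pi : {1..m} -> {1..m}, pi t = element placed at position t.\<close>

definition submodular_on :: "nat set \<Rightarrow> (nat set \<Rightarrow> real) \<Rightarrow> bool" where
  "submodular_on U g \<longleftrightarrow>
     (\<forall>S T. S \<subseteq> U \<longrightarrow> T \<subseteq> U \<longrightarrow> g S + g T \<ge> g (S \<union> T) + g (S \<inter> T))"

definition monotone_on_sets :: "nat set \<Rightarrow> (nat set \<Rightarrow> real) \<Rightarrow> bool" where
  "monotone_on_sets U g \<longleftrightarrow> (\<forall>S T. S \<subseteq> T \<longrightarrow> T \<subseteq> U \<longrightarrow> g S \<le> g T)"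

definition linear_ordering :: "nat \<Rightarrow> (nat \<Rightarrow> nat) \<Rightarrow> bool" where
  "linear_ordering m \<pi> \<longleftrightarrow> bij_betw \<pi> {1..m} {1..m}"

definition cover_time :: "(nat set \<Rightarrow> real) \<Rightarrow> (nat \<Rightarrow> nat) \<Rightarrow> nat" where
  "cover_time g \<pi> = (LEAST c. g (\<pi> ` {1..c}) \<ge> 1)"

definition ordering_cost :: "nat \<Rightarrow> (nat \<Rightarrow> nat set \<Rightarrow> real) \<Rightarrow> (nat \<Rightarrow> real) \<Rightarrow> (nat \<Rightarrow> nat) \<Rightarrow> real" where
  "ordering_cost n f w \<pi> = (\<Sum>i=1..n. w i * real (cover_time (f i) \<pi>))"

definition resid :: "(nat set \<Rightarrow> real) \<Rightarrow> nat set \<Rightarrow> nat \<Rightarrow> real" where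
  "resid g S j = (if g S \<ge> 1 then 0 else min 1 ((g (insert j S) - g S) / (1 - g S)))"

definition aru_score :: "nat \<Rightarrow> (nat \<Rightarrow> nat set \<Rightarrow> real) \<Rightarrow> (nat \<Rightarrow> real) \<Rightarrow> nat set \<Rightarrow> nat \<Rightarrow> real" where
  "aru_score n f w S j = (\<Sum>i=1..n. w i * resid (f i) S j)"

text \<open>pi is an ordering that the Adaptive Residual Updates algorithm can output
(with arbitrary tie-breaking): at each step t, with S = {pi 1,...,pi (t-1)},
pi t maximises the score over the remaining elements.\<close>
definition aru_ordering :: "nat \<Rightarrow> nat \<Rightarrow> (nat \<Rightarrow> nat set \<Rightarrow> real) \<Rightarrow> (nat \<Rightarrow> real) \<Rightarrow> (nat \<Rightarrow> nat) \<Rightarrow> bool" where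
  "aru_ordering n m f w \<pi> \<longleftrightarrow> linear_ordering m \<pi> \<and>
     (\<forall>t\<in>{1..m}. \<forall>j\<in>{1..m} - \<pi> ` {1..<t}.
        aru_score n f w (\<pi> ` {1..<t}) j \<le> aru_score n f w (\<pi> ` {1..<t}) (\<pi> t))"

definition min_marginal :: "nat \<Rightarrow> nat \<Rightarrow> (nat \<Rightarrow> nat set \<Rightarrow> real) \<Rightarrow> real" where
  "min_marginal n m f = Min {f i (insert j S) - f i S | i S j.
      i \<in> {1..n} \<and> S \<subseteq> {1..m} \<and> j \<in> {1..m} \<and> f i (insert j S) - f i S > 0}"

end

theory Submission imports Defs begin

text \<open>
  Write \<open>g t\<close> for the total weight of the functions not yet covered before step \<open>t\<close> of the
  algorithm and \<open>u k\<close> for the weight of the functions not covered by the first \<open>k\<close>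
  elements of the competing ordering, so that the two costs are \<open>\<Sum>t g t\<close> and \<open>\<Sum>k u k\<close>.
  For a function \<open>f\<close> still uncovered when the current set is \<open>S\<close>, submodularity gives
  \<open>\<Sum>j\<in>T P\<^sub>f\<^sub>j \<ge> 1\<close> for every set \<open>T\<close> covering \<open>f\<close>; applied to the first \<open>k\<close> elements of the
  competitor and combined with the greedy choice, this bounds \<open>g t - u k\<close> by \<open>k\<close> times the
  score of the element chosen at step \<open>t\<close>.
  Conversely, along the algorithm's run the residuals \<open>P\<close> of a single function are
  capped relative decreases of \<open>1 - f(S)\<close>, which sum to at most
  \<open>L = 2 + ln (1/\<epsilon>)\<close> because every positive decrease is at least \<open>\<epsilon>\<close>.  Hence the scores on
  any window \<open>[a, a + l)\<close> sum to at most \<open>L \<cdot> g a\<close>, and a window of length \<open>l \<approx> 4Lk\<close>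
  ending at \<open>s\<close> gives \<open>g s \<le> u (s/8L) + g (s/2) / 4\<close>.  Summed over \<open>s \<le> 2m\<close>, the last
  terms contribute only \<open>\<Sum> g / 2\<close>, which leaves \<open>\<Sum> g \<le> O(L) \<cdot> \<Sum> u\<close>.
\<close>

section \<open>Monotone submodular set functions\<close>

lemma monotone_on_setsD:
  "monotone_on_sets U g \<Longrightarrow> S \<subseteq> T \<Longrightarrow> T \<subseteq> U \<Longrightarrow> g S \<le> g T"
  unfolding monotone_on_sets_def by blast

lemma
  assumes bij: "bij_betw \<rho> {1..m} {1..m}" and g_empty: "g {} = 0"
    and mono: "monotone_on_sets {1..m} g" and g_top: "1 \<le> g {1..m}"
  shows cover_time_le: "cover_time g \<rho> \<le> m"
    and cover_time_ge_1: "1 \<le> cover_time g \<rho>"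
    and covered_iff_cover_time_le: "k \<le> m \<Longrightarrow> 1 \<le> g (\<rho> ` {1..k}) \<longleftrightarrow> cover_time g \<rho> \<le> k"
proof -
  have im: "\<rho> ` {1..m} = {1..m}" using bij by (simp add: bij_betw_def)
  have covered_m: "1 \<le> g (\<rho> ` {1..m})" using im g_top by simp
  show "cover_time g \<rho> \<le> m" unfolding cover_time_def by (rule Least_le) (rule covered_m)
  have covered: "1 \<le> g (\<rho> ` {1..cover_time g \<rho>})"
    unfolding cover_time_def by (rule LeastI) (rule covered_m)
  then show "1 \<le> cover_time g \<rho>" using g_empty by (cases "cover_time g \<rho>") auto
  assume k: "k \<le> m"
  show "1 \<le> g (\<rho> ` {1..k}) \<longleftrightarrow> cover_time g \<rho> \<le> k"
  proof
    assume "1 \<le> g (\<rho> ` {1..k})"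
    then show "cover_time g \<rho> \<le> k" unfolding cover_time_def by (rule Least_le)
  next
    assume "cover_time g \<rho> \<le> k"
    then have "\<rho> ` {1..cover_time g \<rho>} \<subseteq> \<rho> ` {1..k}" by auto
    moreover have "\<rho> ` {1..k} \<subseteq> {1..m}" using im k by auto
    ultimately show "1 \<le> g (\<rho> ` {1..k})"
      using covered monotone_on_setsD[OF mono] by (meson order_trans)
  qed
qed

lemma resid_nonneg:
  assumes "monotone_on_sets U g" "S \<subseteq> U" "j \<in> U"
  shows "0 \<le> resid g S j"
proof -
  have "g S \<le> g (insert j S)" using assms by (auto intro: monotone_on_setsD)
  then show ?thesis unfolding resid_def by auto
qed

lemma resid_le_1: "resid g S j \<le> 1"
  unfolding resid_def by auto

lemma resid_of_mem: "j \<in> S \<Longrightarrow> resid g S j = 0"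
  unfolding resid_def by (simp add: insert_absorb)

lemma submodular_on_gain_le_sum_marginals:
  assumes sub: "submodular_on U g" and "S \<subseteq> U" and "finite T" "T \<subseteq> U"
  shows "g (S \<union> T) - g S \<le> (\<Sum>j\<in>T. g (insert j S) - g S)"
  using \<open>finite T\<close> \<open>T \<subseteq> U\<close>
proof (induction T rule: finite_induct)
  case empty
  then show ?case by simp
next
  case (insert a T)
  have "insert a S \<subseteq> U" "S \<union> T \<subseteq> U" using insert.prems \<open>S \<subseteq> U\<close> by auto
  then have "g (insert a S \<union> (S \<union> T)) + g (insert a S \<inter> (S \<union> T)) \<le> g (insert a S) + g (S \<union> T)"
    using sub unfolding submodular_on_def by blast
  moreover have "insert a S \<union> (S \<union> T) = S \<union> insert a T" by blast
  moreover have "insert a S \<inter> (S \<union> T) = S" using insert.hyps(2) by blast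
  ultimately have "g (S \<union> insert a T) - g (S \<union> T) \<le> g (insert a S) - g S" by simp
  with insert show ?case by simp
qed

text \<open>Either some \<open>j \<in> T\<close> has residual capped at 1, or the uncapped residuals sum to
  \<open>(g (S \<union> T) - g S) / (1 - g S) \<ge> 1\<close> by submodularity.\<close>

lemma sum_resid_ge_1:
  assumes mono: "monotone_on_sets U g" and sub: "submodular_on U g"
    and S: "S \<subseteq> U" and T: "T \<subseteq> U" "finite T" and "g S < 1" "1 \<le> g T"
  shows "1 \<le> (\<Sum>j\<in>T. resid g S j)"
proof -
  define r where "r = 1 - g S"
  have r: "r > 0" using \<open>g S < 1\<close> r_def by simp
  have resid_eq: "\<And>j. resid g S j = min 1 ((g (insert j S) - g S) / r)"
    using \<open>g S < 1\<close> unfolding resid_def r_def by simp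
  show ?thesis
  proof (cases "\<exists>j\<in>T. 1 \<le> (g (insert j S) - g S) / r")
    case True
    then obtain j where j: "j \<in> T" "resid g S j = 1" using resid_eq by fastforce
    have "resid g S j \<le> (\<Sum>j\<in>T. resid g S j)"
      using T j resid_nonneg[OF mono S] by (intro member_le_sum) auto
    then show ?thesis using j by simp
  next
    case False
    then have "(\<Sum>j\<in>T. resid g S j) = (\<Sum>j\<in>T. g (insert j S) - g S) / r"
      using resid_eq by (simp add: sum_divide_distrib min_def)
    moreover have "g T \<le> g (S \<union> T)" using S T by (auto intro: monotone_on_setsD[OF mono])
    then have "r \<le> (\<Sum>j\<in>T. g (insert j S) - g S)"
      using submodular_on_gain_le_sum_marginals[OF sub S T(2,1)] \<open>1 \<le> g T\<close> r_def by simp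
    ultimately show ?thesis using r by simp
  qed
qed

section \<open>Capped relative decreases of a positive sequence\<close>

text \<open>\<open>ln r\<close> cut off at level \<open>e\<close>, plus a unit jump at \<open>e\<close>: a sequence whose drops are all
  at least \<open>e\<close> stays positive only if it falls below \<open>e\<close> at most once, and that single
  capped step is paid for by the jump.\<close>

definition log_potential :: "real \<Rightarrow> real \<Rightarrow> real" where
  "log_potential e r = ln (max r e) + (if e \<le> r then 1 else 0)"

lemma log_potential_mono:
  assumes "0 < e" "r \<le> r'"
  shows "log_potential e r \<le> log_potential e r'"
proof -
  have "ln (max r e) \<le> ln (max r' e)" using assms by (subst ln_le_cancel_iff) auto
  moreover have "(if e \<le> r then 1 else 0 :: real) \<le> (if e \<le> r' then 1 else 0)" using assms by auto
  ultimately show ?thesis unfolding log_potential_def by linarith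
qed

lemma ln_le_log_potential:
  assumes "0 < e"
  shows "ln e \<le> log_potential e r"
proof -
  have "ln e \<le> ln (max r e)" using assms by (subst ln_le_cancel_iff) auto
  moreover have "0 \<le> (if e \<le> r then 1 else 0 :: real)" by simp
  ultimately show ?thesis unfolding log_potential_def by linarith
qed

lemma capped_relative_decrease_le_log_potential:
  assumes e: "0 < e" and "0 < r2" "r2 \<le> r1" and gap: "r2 < r1 \<Longrightarrow> e \<le> r1 - r2"
  shows "min 1 ((r1 - r2) / r1) \<le> log_potential e r1 - log_potential e r2"
proof (cases "r2 = r1")
  case True
  then show ?thesis by simp
next
  case False
  then have lt: "r2 < r1" using \<open>r2 \<le> r1\<close> by simp
  have er1: "e < r1" using gap[OF lt] \<open>0 < r2\<close> by simp
  show ?thesis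
  proof (cases "e \<le> r2")
    case True
    have "ln (r2 / r1) \<le> r2 / r1 - 1" using \<open>0 < r2\<close> lt by (intro ln_le_minus_one) simp
    moreover have "ln (r2 / r1) = ln r2 - ln r1" using \<open>0 < r2\<close> lt by (simp add: ln_div)
    moreover have "r2 / r1 - 1 = - ((r1 - r2) / r1)" using lt \<open>0 < r2\<close> by (simp add: field_simps)
    ultimately show ?thesis using True er1 unfolding log_potential_def by (simp add: max_def)
  next
    case False
    have "ln e \<le> ln r1" using e er1 by simp
    then show ?thesis using False er1 unfolding log_potential_def by (simp add: max_def)
  qed
qed

lemma sum_capped_relative_decrease_le:
  fixes r :: "nat \<Rightarrow> real"
  assumes e: "0 < e" and "a \<le> b"
    and pos: "\<And>k. k \<in> {a..b} \<Longrightarrow> 0 < r k"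
    and dec: "\<And>k. k \<in> {a..<b} \<Longrightarrow> r (Suc k) \<le> r k"
    and gap: "\<And>k. k \<in> {a..<b} \<Longrightarrow> r (Suc k) < r k \<Longrightarrow> e \<le> r k - r (Suc k)"
    and start: "r a \<le> 1"
  shows "(\<Sum>k\<in>{a..<b}. min 1 ((r k - r (Suc k)) / r k)) \<le> 1 + max 0 (ln (1 / e))"
proof -
  have "(\<Sum>k\<in>{a..<b}. min 1 ((r k - r (Suc k)) / r k))
        \<le> log_potential e (r a) - log_potential e (r b)"
    using \<open>a \<le> b\<close> pos dec gap
  proof (induction b rule: dec_induct)
    case base
    then show ?case by simp
  next
    case (step k)
    have "min 1 ((r k - r (Suc k)) / r k) \<le> log_potential e (r k) - log_potential e (r (Suc k))"
      using step.prems step.hyps by (intro capped_relative_decrease_le_log_potential[OF e]) auto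
    moreover have "{a..<Suc k} = insert k {a..<k}" using step.hyps by auto
    ultimately show ?case using step by simp
  qed
  also have "\<dots> \<le> log_potential e 1 - ln e"
    using log_potential_mono[OF e start] ln_le_log_potential[OF e, of "r b"] by linarith
  also have "\<dots> \<le> 1 + max 0 (ln (1 / e))"
    using e by (auto simp: log_potential_def max_def ln_div)
  finally show ?thesis .
qed

section \<open>Comparing two sums of remaining weights\<close>

lemma sum_if_le_const:
  assumes "c \<le> M"
  shows "(\<Sum>t=1..M. if t \<le> c then x else 0) = real c * (x :: real)"
proof -
  have "(\<Sum>t=1..M. if t \<le> c then x else 0) = (\<Sum>t\<in>{t\<in>{1..M}. t \<le> c}. x)"
    by (rule sum.inter_filter[symmetric]) simp
  also have "{t\<in>{1..M}. t \<le> c} = {1..c}" using assms by auto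
  finally show ?thesis by simp
qed

lemma sum_pairs: "(\<Sum>s=1..2*N. h ((s + 1) div 2)) = 2 * (\<Sum>t=1..(N::nat). (h t :: real))"
proof (induction N)
  case 0
  then show ?case by simp
next
  case (Suc N)
  have "2 * Suc N = Suc (Suc (2 * N))" by simp
  then have "(\<Sum>s=1..2 * Suc N. h ((s + 1) div 2)) = (\<Sum>s=1..2*N. h ((s + 1) div 2)) + h (Suc N) + h (Suc N)"
    by simp
  then show ?case using Suc by simp
qed

lemma sum_blocks:
  assumes "0 < q"
  shows "(\<Sum>s<q*N. h (s div q)) = real q * (\<Sum>k<N. (h k :: real))"
proof (induction N)
  case 0
  then show ?case by simp
next
  case (Suc N)
  have "{..<q * Suc N} = {0..<q*N} \<union> {q*N..<q*N + q}" by auto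
  then have "(\<Sum>s<q * Suc N. h (s div q)) = (\<Sum>s\<in>{0..<q*N}. h (s div q)) + (\<Sum>s\<in>{q*N..<q*N + q}. h (s div q))"
    by (simp add: sum.union_disjoint disjoint_iff)
  also have "(\<Sum>s\<in>{q*N..<q*N + q}. h (s div q)) = (\<Sum>s\<in>{q*N..<q*N + q}. h N)"
  proof (rule sum.cong)
    fix s assume "s \<in> {q*N..<q*N + q}"
    then have "s div q = N" by (intro div_nat_eqI) auto
    then show "h (s div q) = h N" by simp
  qed simp
  finally show ?case using Suc by (simp add: atLeast0LessThan[symmetric] algebra_simps)
qed

text \<open>The averaging argument needs only the window inequality, so it is stated for arbitrary
  remaining-weight profiles \<open>g\<close> (algorithm) and \<open>u\<close> (competitor).\<close>

locale window_bound =
  fixes g u :: "nat \<Rightarrow> real" and L :: real and D m :: nat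
  assumes D: "4 * L \<le> real D" "2 \<le> D"
    and g_antimono: "\<And>s t. s \<le> t \<Longrightarrow> g t \<le> g s"
    and g_vanishes: "\<And>t. m < t \<Longrightarrow> g t = 0"
    and u_nonneg: "\<And>k. 0 \<le> u k"
    and g_le_u0: "\<And>t. g t \<le> u 0"
    and window: "\<And>a k l. 1 \<le> a \<Longrightarrow> k \<le> m \<Longrightarrow> real l * (g (a + l) - u k) \<le> real k * L * g a"
begin

lemma g_nonneg: "0 \<le> g t"
  using g_antimono[of t "m + 1 + t"] g_vanishes[of "m + 1 + t"] by simp

text \<open>Apply the window of length \<open>D k\<close> ending at \<open>s\<close>, where \<open>k = s div 2D\<close>.\<close>

lemma g_le_u_plus_quarter:
  assumes s: "1 \<le> s" "s \<le> 2 * m"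
  shows "g s \<le> u (s div (2 * D)) + g ((s + 1) div 2) / 4"
proof (cases "s < 2 * D")
  case True
  then show ?thesis using g_le_u0[of s] g_nonneg[of "(s + 1) div 2"] by simp
next
  case False
  define k where "k = s div (2 * D)"
  define a where "a = s - D * k"
  have k1: "1 \<le> k" using False D(2) unfolding k_def by (simp add: div_greater_zero_iff Suc_le_eq)
  have "k \<le> s div 2" unfolding k_def using D(2) by (simp add: div_le_mono2)
  then have km: "k \<le> m" using s by linarith
  have "k * (2 * D) \<le> s" unfolding k_def by (simp add: div_times_less_eq_dividend)
  then have a: "a + D * k = s" "(s + 1) div 2 \<le> a" unfolding a_def by (simp_all add: algebra_simps)
  have "real (D * k) * (g s - u k) \<le> real k * L * g a"
    using window[OF _ km, of a "D * k"] a s by simp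
  also have "\<dots> \<le> real k * (real D / 4) * g a"
    using D(1) g_nonneg[of a] by (intro mult_right_mono mult_left_mono) auto
  finally have "(real D * real k) * (g s - u k) \<le> (real D * real k) * (g a / 4)"
    by (simp add: algebra_simps)
  moreover have "0 < real D * real k" using D(2) k1 by simp
  ultimately have "g s - u k \<le> g a / 4" by (meson mult_left_le_imp_le)
  moreover have "g a \<le> g ((s + 1) div 2)" using a(2) by (rule g_antimono)
  ultimately show ?thesis unfolding k_def by linarith
qed

lemma sum_g_le: "(\<Sum>t=1..m. g t) \<le> 4 * real D * (\<Sum>k<m. u k)"
proof -
  have "(\<Sum>t=1..m. g t) = (\<Sum>s=1..2*m. g s)"
    by (rule sum.mono_neutral_left) (auto intro: g_vanishes)
  also have "\<dots> \<le> (\<Sum>s=1..2*m. u (s div (2 * D)) + g ((s + 1) div 2) / 4)"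
    by (rule sum_mono) (use g_le_u_plus_quarter in auto)
  also have "\<dots> = (\<Sum>s=1..2*m. u (s div (2 * D))) + (\<Sum>t=1..m. g t) / 2"
    by (simp only: sum.distrib sum_divide_distrib[symmetric] sum_pairs)
  also have "(\<Sum>s=1..2*m. u (s div (2 * D))) \<le> (\<Sum>s<2 * D * m. u (s div (2 * D)))"
  proof (rule sum_mono2)
    show "{1..2*m} \<subseteq> {..<2 * D * m}"
    proof
      fix s assume "s \<in> {1..2*m}"
      then have "s < 2 * 2 * m" by simp
      also have "\<dots> \<le> 2 * D * m" using D(2) by (intro mult_le_mono) auto
      finally show "s \<in> {..<2 * D * m}" by simp
    qed
  qed (simp_all add: u_nonneg)
  also have "\<dots> = 2 * real D * (\<Sum>k<m. u k)"
    using D(2) by (simp add: sum_blocks)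
  finally show ?thesis by simp
qed

end

section \<open>Analysis of Adaptive Residual Updates\<close>

locale aru_run =
  fixes n m :: nat and f :: "nat \<Rightarrow> nat set \<Rightarrow> real" and w :: "nat \<Rightarrow> real"
    and \<pi> \<sigma> :: "nat \<Rightarrow> nat"
  assumes f_empty: "\<And>i. i \<in> {1..n} \<Longrightarrow> f i {} = 0"
    and f_mono: "\<And>i. i \<in> {1..n} \<Longrightarrow> monotone_on_sets {1..m} (f i)"
    and f_submodular: "\<And>i. i \<in> {1..n} \<Longrightarrow> submodular_on {1..m} (f i)"
    and f_top: "\<And>i. i \<in> {1..n} \<Longrightarrow> 1 \<le> f i {1..m}"
    and w_nonneg: "\<And>i. i \<in> {1..n} \<Longrightarrow> 0 \<le> w i"
    and aru: "aru_ordering n m f w \<pi>"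
    and \<sigma>_ordering: "linear_ordering m \<sigma>"
begin

definition "alg_cover i = cover_time (f i) \<pi>"
definition "opt_cover i = cover_time (f i) \<sigma>"
definition "prefix t = \<pi> ` {1..<t}"
definition "step_resid i t = resid (f i) (prefix t) (\<pi> t)"
definition "chosen_score t = aru_score n f w (prefix t) (\<pi> t)"
definition "eps = min_marginal n m f"
definition "L = 2 + max 0 (ln (1 / eps))"
definition "alg_alive t = (\<Sum>i=1..n. if t \<le> alg_cover i then w i else 0)"
definition "opt_alive k = (\<Sum>i=1..n. if k < opt_cover i then w i else 0)"

lemma bij_\<pi>: "bij_betw \<pi> {1..m} {1..m}"
  using aru by (simp add: aru_ordering_def linear_ordering_def)

lemma bij_\<sigma>: "bij_betw \<sigma> {1..m} {1..m}"
  using \<sigma>_ordering by (simp add: linear_ordering_def)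

lemma \<pi>_in: "t \<in> {1..m} \<Longrightarrow> \<pi> t \<in> {1..m}"
  using bij_\<pi> by (rule bij_betw_apply)

lemma prefix_subset: "t \<le> m + 1 \<Longrightarrow> prefix t \<subseteq> {1..m}"
  using bij_\<pi> by (auto simp: prefix_def bij_betw_def)

lemma prefix_Suc: "1 \<le> t \<Longrightarrow> prefix (Suc t) = insert (\<pi> t) (prefix t)"
  unfolding prefix_def by (simp add: atLeastLessThanSuc)

lemma alg_cover_bounds: "i \<in> {1..n} \<Longrightarrow> 1 \<le> alg_cover i \<and> alg_cover i \<le> m"
  using cover_time_ge_1[OF bij_\<pi>] cover_time_le[OF bij_\<pi>] f_empty f_mono f_top
  by (simp add: alg_cover_def)

lemma opt_cover_bounds: "i \<in> {1..n} \<Longrightarrow> 1 \<le> opt_cover i \<and> opt_cover i \<le> m"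
  using cover_time_ge_1[OF bij_\<sigma>] cover_time_le[OF bij_\<sigma>] f_empty f_mono f_top
  by (simp add: opt_cover_def)

lemma uncovered_iff:
  assumes i: "i \<in> {1..n}" and t: "1 \<le> t" "t \<le> m + 1"
  shows "f i (prefix t) < 1 \<longleftrightarrow> t \<le> alg_cover i"
proof -
  have "prefix t = \<pi> ` {1..t - 1}" using t by (auto simp: prefix_def)
  moreover have "1 \<le> f i (\<pi> ` {1..t - 1}) \<longleftrightarrow> alg_cover i \<le> t - 1"
    using covered_iff_cover_time_le[OF bij_\<pi> f_empty[OF i] f_mono[OF i] f_top[OF i]] t
    by (simp add: alg_cover_def)
  ultimately show ?thesis using t by auto
qed

lemma step_resid_nonneg: "i \<in> {1..n} \<Longrightarrow> t \<in> {1..m} \<Longrightarrow> 0 \<le> step_resid i t"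
  unfolding step_resid_def using prefix_subset \<pi>_in
  by (intro resid_nonneg[OF f_mono]) auto

lemma step_resid_after_cover:
  "i \<in> {1..n} \<Longrightarrow> 1 \<le> t \<Longrightarrow> t \<le> m \<Longrightarrow> alg_cover i < t \<Longrightarrow> step_resid i t = 0"
  using uncovered_iff[of i t] by (simp add: step_resid_def resid_def)

lemma chosen_score_eq: "chosen_score t = (\<Sum>i=1..n. w i * step_resid i t)"
  by (simp add: chosen_score_def aru_score_def step_resid_def)

lemma chosen_score_nonneg: "t \<in> {1..m} \<Longrightarrow> 0 \<le> chosen_score t"
  unfolding chosen_score_eq by (rule sum_nonneg) (simp add: step_resid_nonneg w_nonneg)

lemma eps_le_marginal:
  assumes "i \<in> {1..n}" "S \<subseteq> {1..m}" "j \<in> {1..m}" "0 < f i (insert j S) - f i S"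
  shows "0 < eps \<and> eps \<le> f i (insert j S) - f i S"
proof -
  define M where "M = {f i (insert j S) - f i S | i S j.
      i \<in> {1..n} \<and> S \<subseteq> {1..m} \<and> j \<in> {1..m} \<and> f i (insert j S) - f i S > 0}"
  have "M \<subseteq> (\<lambda>(i, S, j). f i (insert j S) - f i S) ` ({1..n} \<times> Pow {1..m} \<times> {1..m})"
    unfolding M_def by force
  then have "finite M" by (rule finite_subset) auto
  moreover have "f i (insert j S) - f i S \<in> M" unfolding M_def using assms by blast
  moreover have "eps = Min M" by (simp add: eps_def min_marginal_def M_def)
  moreover have "\<forall>x\<in>M. 0 < x" unfolding M_def by auto
  ultimately show ?thesis by (metis Min_in Min_le empty_iff)
qed

text \<open>The covering step of \<open>f i\<close> has a positive marginal, so \<open>eps\<close> is not the junk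
  value \<open>Min {}\<close>.\<close>

lemma eps_pos:
  assumes i: "i \<in> {1..n}"
  shows "0 < eps"
proof -
  define c where "c = alg_cover i"
  have c: "1 \<le> c" "c \<le> m" using alg_cover_bounds[OF i] c_def by auto
  have "f i (prefix c) < 1" "\<not> f i (prefix (Suc c)) < 1"
    using uncovered_iff[OF i] c c_def by auto
  then have "0 < f i (insert (\<pi> c) (prefix c)) - f i (prefix c)" using prefix_Suc c by simp
  moreover have "prefix c \<subseteq> {1..m}" "\<pi> c \<in> {1..m}" using c prefix_subset[of c] \<pi>_in[of c] by auto
  ultimately show ?thesis using eps_le_marginal[OF i] by blast
qed

text \<open>The residuals of \<open>f i\<close> are the capped relative decreases of \<open>1 - f i (prefix t)\<close>.\<close>

lemma sum_step_resid_le: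
  assumes i: "i \<in> {1..n}"
  shows "(\<Sum>t=1..m. step_resid i t) \<le> L"
proof -
  define r where "r t = 1 - f i (prefix t)" for t
  define c where "c = alg_cover i"
  have c: "1 \<le> c" "c \<le> m" using alg_cover_bounds[OF i] c_def by auto
  have pos: "0 < r t" if "t \<in> {1..c}" for t
    using uncovered_iff[OF i] that c unfolding r_def c_def by auto
  have drop: "r (Suc t) \<le> r t \<and> (r (Suc t) < r t \<longrightarrow> eps \<le> r t - r (Suc t))"
    if t: "t \<in> {1..<c}" for t
  proof -
    have S: "prefix t \<subseteq> {1..m}" "\<pi> t \<in> {1..m}" using t c prefix_subset[of t] \<pi>_in[of t] by auto
    have "f i (prefix t) \<le> f i (insert (\<pi> t) (prefix t))"
      using S by (intro monotone_on_setsD[OF f_mono[OF i]]) auto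
    then show ?thesis using eps_le_marginal[OF i S] prefix_Suc t unfolding r_def by auto
  qed
  have resid_eq: "step_resid i t = min 1 ((r t - r (Suc t)) / r t)" if "t \<in> {1..<c}" for t
    using pos[of t] that prefix_Suc[of t] unfolding step_resid_def resid_def r_def by auto
  have "r 1 = 1" using f_empty[OF i] by (simp add: r_def prefix_def)
  then have "(\<Sum>t\<in>{1..<c}. min 1 ((r t - r (Suc t)) / r t)) \<le> 1 + max 0 (ln (1 / eps))"
    using pos drop by (intro sum_capped_relative_decrease_le[OF eps_pos[OF i] c(1)]) auto
  then have head: "(\<Sum>t\<in>{1..<c}. step_resid i t) \<le> 1 + max 0 (ln (1 / eps))"
    using resid_eq by simp
  have "{1..m} = {1..<c} \<union> {c} \<union> {Suc c..m}" using c by auto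
  then have "(\<Sum>t=1..m. step_resid i t)
      = (\<Sum>t\<in>{1..<c}. step_resid i t) + step_resid i c + (\<Sum>t\<in>{Suc c..m}. step_resid i t)"
    by (simp add: sum.union_disjoint disjoint_iff)
  also have "(\<Sum>t\<in>{Suc c..m}. step_resid i t) = 0"
    using step_resid_after_cover[OF i] c_def by (intro sum.neutral) auto
  finally show ?thesis
    using head resid_le_1[of "f i" "prefix c" "\<pi> c"] unfolding L_def step_resid_def by linarith
qed

lemma alg_alive_antimono: "s \<le> t \<Longrightarrow> alg_alive t \<le> alg_alive s"
  unfolding alg_alive_def by (rule sum_mono) (auto simp: w_nonneg)

lemma alg_alive_vanishes: "m < t \<Longrightarrow> alg_alive t = 0"
  unfolding alg_alive_def using alg_cover_bounds by (intro sum.neutral) fastforce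

lemma opt_alive_nonneg: "0 \<le> opt_alive k"
  unfolding opt_alive_def by (rule sum_nonneg) (simp add: w_nonneg)

lemma alg_alive_le_opt_alive_0: "alg_alive t \<le> opt_alive 0"
  unfolding alg_alive_def opt_alive_def
proof (rule sum_mono)
  fix i assume "i \<in> {1..n}"
  then show "(if t \<le> alg_cover i then w i else 0) \<le> (if 0 < opt_cover i then w i else 0)"
    using opt_cover_bounds[of i] w_nonneg[of i] by auto
qed

lemma alg_alive_nonneg: "0 \<le> alg_alive t"
  unfolding alg_alive_def by (rule sum_nonneg) (simp add: w_nonneg)

lemma covered_weight_le_sum_scores:
  assumes t: "t \<in> {1..m}" and k: "k \<le> m"
  shows "(\<Sum>i=1..n. if t \<le> alg_cover i \<and> opt_cover i \<le> k then w i else 0)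
    \<le> (\<Sum>j\<in>\<sigma> ` {1..k}. aru_score n f w (prefix t) j)"
proof -
  define T where "T = \<sigma> ` {1..k}"
  have T: "T \<subseteq> {1..m}" "finite T" using k bij_\<sigma> unfolding T_def by (auto simp: bij_betw_def)
  have S: "prefix t \<subseteq> {1..m}" using t by (intro prefix_subset) auto
  have "(\<Sum>i=1..n. if t \<le> alg_cover i \<and> opt_cover i \<le> k then w i else 0)
      \<le> (\<Sum>i=1..n. w i * (\<Sum>j\<in>T. resid (f i) (prefix t) j))"
  proof (rule sum_mono)
    fix i assume i: "i \<in> {1..n}"
    have "0 \<le> (\<Sum>j\<in>T. resid (f i) (prefix t) j)"
      by (rule sum_nonneg) (use resid_nonneg[OF f_mono[OF i] S] T in auto)
    moreover have "1 \<le> (\<Sum>j\<in>T. resid (f i) (prefix t) j)"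
      if "t \<le> alg_cover i" "opt_cover i \<le> k"
    proof (rule sum_resid_ge_1[OF f_mono[OF i] f_submodular[OF i] S T])
      show "f i (prefix t) < 1" using uncovered_iff[OF i] t that by auto
      show "1 \<le> f i T"
        using covered_iff_cover_time_le[OF bij_\<sigma> f_empty[OF i] f_mono[OF i] f_top[OF i] k] that
        by (simp add: T_def opt_cover_def)
    qed
    ultimately show "(if t \<le> alg_cover i \<and> opt_cover i \<le> k then w i else 0)
        \<le> w i * (\<Sum>j\<in>T. resid (f i) (prefix t) j)"
      using w_nonneg[OF i] mult_left_mono[of 1 _ "w i"] by auto
  qed
  also have "\<dots> = (\<Sum>j\<in>T. aru_score n f w (prefix t) j)"
    unfolding aru_score_def by (simp add: sum_distrib_left sum.swap[of _ T])
  finally show ?thesis unfolding T_def .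
qed

lemma sum_scores_le_chosen_score:
  assumes t: "t \<in> {1..m}" and T: "T \<subseteq> {1..m}"
  shows "(\<Sum>j\<in>T. aru_score n f w (prefix t) j) \<le> real (card T) * chosen_score t"
proof (rule sum_bounded_above)
  fix j assume "j \<in> T"
  show "aru_score n f w (prefix t) j \<le> chosen_score t"
  proof (cases "j \<in> prefix t")
    case True
    then show ?thesis using chosen_score_nonneg[OF t] by (simp add: aru_score_def resid_of_mem)
  next
    case False
    then show ?thesis using aru t \<open>j \<in> T\<close> T by (auto simp: aru_ordering_def chosen_score_def prefix_def)
  qed
qed

lemma alive_gap_le_chosen_score:
  assumes t: "t \<in> {1..m}" and k: "k \<le> m"
  shows "alg_alive t - opt_alive k \<le> real k * chosen_score t"
proof -
  have "alg_alive t - opt_alive k = (\<Sum>i=1..n. (if t \<le> alg_cover i then w i else 0) - (if k < opt_cover i then w i else 0))"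
    by (simp add: alg_alive_def opt_alive_def sum_subtractf)
  also have "\<dots> \<le> (\<Sum>i=1..n. if t \<le> alg_cover i \<and> opt_cover i \<le> k then w i else 0)"
    by (rule sum_mono) (auto simp: w_nonneg)
  also have "\<dots> \<le> (\<Sum>j\<in>\<sigma> ` {1..k}. aru_score n f w (prefix t) j)"
    by (rule covered_weight_le_sum_scores[OF t k])
  also have "\<dots> \<le> real (card (\<sigma> ` {1..k})) * chosen_score t"
    using bij_\<sigma> k by (intro sum_scores_le_chosen_score[OF t]) (auto simp: bij_betw_def)
  also have "\<dots> \<le> real k * chosen_score t"
    using card_image_le[of "{1..k}" \<sigma>] chosen_score_nonneg[OF t] by (simp add: mult_right_mono)
  finally show ?thesis .
qed

lemma sum_chosen_score_le:
  assumes a: "1 \<le> a" and b: "b \<le> m"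
  shows "(\<Sum>t\<in>{a..<b}. chosen_score t) \<le> L * alg_alive a"
proof -
  have "(\<Sum>t\<in>{a..<b}. chosen_score t) = (\<Sum>i=1..n. w i * (\<Sum>t\<in>{a..<b}. step_resid i t))"
    unfolding chosen_score_eq by (simp add: sum_distrib_left sum.swap[of _ "{a..<b}"])
  also have "\<dots> \<le> (\<Sum>i=1..n. L * (if a \<le> alg_cover i then w i else 0))"
  proof (rule sum_mono)
    fix i assume i: "i \<in> {1..n}"
    show "w i * (\<Sum>t\<in>{a..<b}. step_resid i t) \<le> L * (if a \<le> alg_cover i then w i else 0)"
    proof (cases "a \<le> alg_cover i")
      case True
      have "(\<Sum>t\<in>{a..<b}. step_resid i t) \<le> (\<Sum>t=1..m. step_resid i t)"
        by (rule sum_mono2) (use a b step_resid_nonneg[OF i] in auto)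
      also have "\<dots> \<le> L" by (rule sum_step_resid_le[OF i])
      finally show ?thesis using True w_nonneg[OF i] by (simp add: mult_left_mono mult.commute)
    next
      case False
      then have "(\<Sum>t\<in>{a..<b}. step_resid i t) = 0"
        using a b step_resid_after_cover[OF i] by (intro sum.neutral) auto
      then show ?thesis using False by simp
    qed
  qed
  also have "\<dots> = L * alg_alive a" by (simp add: alg_alive_def sum_distrib_left)
  finally show ?thesis .
qed

lemma alg_alive_window:
  assumes a: "1 \<le> a" and k: "k \<le> m"
  shows "real l * (alg_alive (a + l) - opt_alive k) \<le> real k * L * alg_alive a"
proof (cases "a + l \<le> m")
  case False
  then have "real l * (alg_alive (a + l) - opt_alive k) \<le> 0"
    using alg_alive_vanishes opt_alive_nonneg[of k] by (simp add: mult_nonneg_nonpos)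
  also have "0 \<le> real k * L * alg_alive a" using alg_alive_nonneg[of a] by (simp add: L_def)
  finally show ?thesis .
next
  case True
  have "real l * (alg_alive (a + l) - opt_alive k) = (\<Sum>t\<in>{a..<a + l}. alg_alive (a + l) - opt_alive k)"
    by simp
  also have "\<dots> \<le> (\<Sum>t\<in>{a..<a + l}. real k * chosen_score t)"
  proof (rule sum_mono)
    fix t assume t: "t \<in> {a..<a + l}"
    then have "alg_alive (a + l) \<le> alg_alive t" by (intro alg_alive_antimono) auto
    moreover have "alg_alive t - opt_alive k \<le> real k * chosen_score t"
      using t a True k by (intro alive_gap_le_chosen_score) auto
    ultimately show "alg_alive (a + l) - opt_alive k \<le> real k * chosen_score t" by linarith
  qed
  also have "\<dots> \<le> real k * (L * alg_alive a)"
    using sum_chosen_score_le[OF a True] by (simp add: sum_distrib_left[symmetric] mult_left_mono)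
  finally show ?thesis by simp
qed

lemma ordering_cost_\<pi>: "ordering_cost n f w \<pi> = (\<Sum>t=1..m. alg_alive t)"
proof -
  have "(\<Sum>t=1..m. alg_alive t) = (\<Sum>i=1..n. \<Sum>t=1..m. if t \<le> alg_cover i then w i else 0)"
    unfolding alg_alive_def by (rule sum.swap)
  also have "\<dots> = (\<Sum>i=1..n. real (alg_cover i) * w i)"
    using alg_cover_bounds by (intro sum.cong refl sum_if_le_const) auto
  finally show ?thesis by (simp add: ordering_cost_def alg_cover_def mult.commute)
qed

lemma ordering_cost_\<sigma>: "ordering_cost n f w \<sigma> = (\<Sum>k<m. opt_alive k)"
proof -
  have "(\<Sum>k<m. opt_alive k) = (\<Sum>t=1..m. opt_alive (t - 1))"
    by (rule sum.reindex_bij_witness[of _ "\<lambda>t. t - 1" Suc]) auto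
  also have "\<dots> = (\<Sum>i=1..n. \<Sum>t=1..m. if t \<le> opt_cover i then w i else 0)"
    unfolding opt_alive_def by (subst sum.swap) (intro sum.cong; auto)
  also have "\<dots> = (\<Sum>i=1..n. real (opt_cover i) * w i)"
    using opt_cover_bounds by (intro sum.cong refl sum_if_le_const) auto
  finally show ?thesis by (simp add: ordering_cost_def opt_cover_def mult.commute)
qed

lemma ordering_cost_le:
  "ordering_cost n f w \<pi> \<le> 52 * max 1 (ln (1 / min_marginal n m f)) * ordering_cost n f w \<sigma>"
proof -
  define D where "D = nat \<lceil>4 * L\<rceil>"
  have L: "2 \<le> L" "L \<le> 3 * max 1 (ln (1 / min_marginal n m f))"
    by (auto simp: L_def eps_def)
  have D_bounds: "4 * L \<le> real D" "real D \<le> 4 * L + 1"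
    unfolding D_def using L(1) by linarith+
  interpret window_bound alg_alive opt_alive L D m
    using D_bounds L(1) alg_alive_antimono alg_alive_vanishes opt_alive_nonneg alg_alive_le_opt_alive_0 alg_alive_window
    by unfold_locales auto
  have "ordering_cost n f w \<pi> \<le> 4 * real D * ordering_cost n f w \<sigma>"
    using sum_g_le by (simp add: ordering_cost_\<pi> ordering_cost_\<sigma>)
  moreover have "4 * real D \<le> 52 * max 1 (ln (1 / min_marginal n m f))"
    using D_bounds L max.cobounded1[of 1 "ln (1 / min_marginal n m f)"] by linarith
  moreover have "0 \<le> ordering_cost n f w \<sigma>" by (simp add: ordering_cost_\<sigma> sum_nonneg opt_alive_nonneg)
  ultimately show ?thesis by (meson mult_right_mono order_trans)
qed

end

theorem theorem1:
  shows "\<exists>C>0. \<forall>(n::nat) (m::nat) (f::nat \<Rightarrow> nat set \<Rightarrow> real) (w::nat \<Rightarrow> real) \<pi> \<sigma>.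
    (\<forall>i\<in>{1..n}. f i {} = 0 \<and> monotone_on_sets {1..m} (f i) \<and> submodular_on {1..m} (f i)
        \<and> (\<forall>S\<subseteq>{1..m}. f i S \<ge> 0) \<and> f i {1..m} \<ge> 1 \<and> w i \<ge> 0) \<longrightarrow>
    aru_ordering n m f w \<pi> \<longrightarrow> linear_ordering m \<sigma> \<longrightarrow>
    ordering_cost n f w \<pi> \<le> C * max 1 (ln (1 / min_marginal n m f)) * ordering_cost n f w \<sigma>"
proof (intro exI[of _ "52::real"] conjI allI impI)
  fix n m f w \<pi> \<sigma>
  assume "\<forall>i\<in>{1..n}. f i {} = 0 \<and> monotone_on_sets {1..m} (f i) \<and> submodular_on {1..m} (f i)
        \<and> (\<forall>S\<subseteq>{1..m}. f i S \<ge> 0) \<and> f i {1..m} \<ge> 1 \<and> w i \<ge> 0"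
    and "aru_ordering n m f w \<pi>" "linear_ordering m \<sigma>"
  then interpret aru_run n m f w \<pi> \<sigma> by unfold_locales auto
  show "ordering_cost n f w \<pi> \<le> 52 * max 1 (ln (1 / min_marginal n m f)) * ordering_cost n f w \<sigma>"
    by (rule ordering_cost_le)
qed simp

end
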